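(* Let $(k,\nu)$ be a valued field with value group contained in $\mathbb{Z}$, let $V$ be a $k$-vector space of finite dimension $r$ with a value function $\operatorname{val}\colon V\to\mathbb{Z}\cup\{\infty\}$, and let $x\in k$ with $\nu(x)=1$. Assume that the completion $V_\nu$ of $V$ has dimension $r$ over the completion $k_\nu$ of $k$. Consider the following procedure, applied to a $k$-basis $B_1,\dots,B_r$ of $V$: for $d=1,\dots,r$ in turn, first replace $B_d$ by $x^{-\operatorname{val}(B_d)}B_d$; then, as long as there exist $\alpha_1,\dots,\alpha_{d-1}\in k$ with $\operatorname{val}(\alpha_1B_1+\cdots+\alpha_{d-1}B_{d-1}+B_d)>0$, choose such $\alpha_1,\dots,\alpha_{d-1}$ and replace $B_d$ by $x^{-1}(\alpha_1B_1+\cdots+\alpha_{d-1}B_{d-1}+B_d)$. Finally return $B_1,\dots,B_r$. Then this procedure terminates (each of its while-loops performs only finitely many iterations, regardless of the choices of the $\alpha_i$).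
   Context: A valuation $\nu\colon k\to\mathbb{Z}\cup\{\infty\}$ on a field $k$ of characteristic zero satisfies $\nu(a)=\infty\iff a=0$, $\nu(ab)=\nu(a)+\nu(b)$, $\nu(a+b)\ge\min\{\nu(a),\nu(b)\}$. A value function $\operatorname{val}\colon V\to\mathbb{Z}\cup\{\infty\}$ on a $k$-vector space satisfies $\operatorname{val}(v)=\infty\iff v=0$, $\operatorname{val}(av)=\nu(a)+\operatorname{val}(v)$, $\operatorname{val}(v+w)\ge\min\{\operatorname{val}(v),\operatorname{val}(w)\}$. The $\nu$-adic absolute value $|a|=e^{-\nu(a)}$ defines a topology on $k$; $k_\nu$ denotes the completion of $k$ (Cauchy sequences modulo null sequences), with $\nu$ extended by continuity. $V$ carries the norm $\|v\|=e^{-\operatorname{val}(v)}$, and $V_\nu$ denotes the $k_\nu$-vector space obtained from $V$ by scalar extension, i.e. its completion with respect to this norm (for a basis $B_1,\dots,B_r$ of $V$, it is the $k_\nu$-span of $B_1,\dots,B_r$); in general $\dim_{k_\nu}V_\nu\le\dim_k V$. *)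

theory Defs
  imports Main "HOL.Vector_Spaces"
begin

text \<open>Conventions. Values in Z \<union> {\<infinity>} are represented by an int-valued function whose
value at 0 is irrelevant; "val v \<ge> M" in the extended sense is written ext_ge (true for v = 0).\<close>

definition ext_ge :: "('b::zero \<Rightarrow> int) \<Rightarrow> int \<Rightarrow> 'b \<Rightarrow> bool" where
  "ext_ge f M v \<longleftrightarrow> v = 0 \<or> M \<le> f v"

definition ext_pos :: "('b::zero \<Rightarrow> int) \<Rightarrow> 'b \<Rightarrow> bool" where
  "ext_pos f v \<longleftrightarrow> v = 0 \<or> 0 < f v"

definition is_valuation :: "('a::field \<Rightarrow> int) \<Rightarrow> bool" where
  "is_valuation \<nu> \<longleftrightarrow>
     (\<forall>a b. a \<noteq> 0 \<longrightarrow> b \<noteq> 0 \<longrightarrow> \<nu> (a * b) = \<nu> a + \<nu> b) \<and>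
     (\<forall>a b. a \<noteq> 0 \<longrightarrow> b \<noteq> 0 \<longrightarrow> a + b \<noteq> 0 \<longrightarrow> min (\<nu> a) (\<nu> b) \<le> \<nu> (a + b))"

definition is_value_function ::
  "('a::field \<Rightarrow> 'v::ab_group_add \<Rightarrow> 'v) \<Rightarrow> ('a \<Rightarrow> int) \<Rightarrow> ('v \<Rightarrow> int) \<Rightarrow> bool" where
  "is_value_function scale \<nu> val \<longleftrightarrow>
     (\<forall>a v. a \<noteq> 0 \<longrightarrow> v \<noteq> 0 \<longrightarrow> val (scale a v) = \<nu> a + val v) \<and>
     (\<forall>v w. v \<noteq> 0 \<longrightarrow> w \<noteq> 0 \<longrightarrow> v + w \<noteq> 0 \<longrightarrow> min (val v) (val w) \<le> val (v + w))"

definition cauchy_seq :: "('b::ab_group_add \<Rightarrow> int) \<Rightarrow> (nat \<Rightarrow> 'b) \<Rightarrow> bool" where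
  "cauchy_seq f c \<longleftrightarrow> (\<forall>M. \<exists>N. \<forall>m\<ge>N. \<forall>n\<ge>N. ext_ge f M (c m - c n))"

definition null_seq :: "('b::zero \<Rightarrow> int) \<Rightarrow> (nat \<Rightarrow> 'b) \<Rightarrow> bool" where
  "null_seq f c \<longleftrightarrow> (\<forall>M. \<exists>N. \<forall>n\<ge>N. ext_ge f M (c n))"

text \<open>dim_{k_nu} V_nu = r for V with basis B_1..B_r: V_nu is the k_nu-span of the classes
[B_1],...,[B_r] in the completion of V (Cauchy sequences modulo null sequences), and its
dimension is r iff these r classes are k_nu-linearly independent, i.e. a k_nu-linear
combination (classes of Cauchy sequences c_i in k) giving the zero class (a null sequence in V)
has all coefficients zero (null sequences in k).\<close>
definition completion_full_dim ::
  "('a::field \<Rightarrow> 'v::ab_group_add \<Rightarrow> 'v) \<Rightarrow> ('a \<Rightarrow> int) \<Rightarrow> ('v \<Rightarrow> int) \<Rightarrow> nat \<Rightarrow> (nat \<Rightarrow> 'v) \<Rightarrow> bool" where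
  "completion_full_dim scale \<nu> val r B \<longleftrightarrow>
     (\<forall>c :: nat \<Rightarrow> nat \<Rightarrow> 'a.
        (\<forall>i\<in>{1..r}. cauchy_seq \<nu> (c i)) \<longrightarrow>
        null_seq val (\<lambda>n. \<Sum>i\<in>{1..r}. scale (c i n) (B i)) \<longrightarrow>
        (\<forall>i\<in>{1..r}. null_seq \<nu> (c i)))"

text \<open>The procedure, as a nondeterministic transition system on states (d, B).\<close>
definition comb :: "('a \<Rightarrow> 'v::ab_group_add \<Rightarrow> 'v) \<Rightarrow> (nat \<Rightarrow> 'v) \<Rightarrow> nat \<Rightarrow> (nat \<Rightarrow> 'a) \<Rightarrow> 'v" where
  "comb scale B d \<alpha> = (\<Sum>i\<in>{1..<d}. scale (\<alpha> i) (B i)) + B d"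

definition loop_guard ::
  "('a \<Rightarrow> 'v::ab_group_add \<Rightarrow> 'v) \<Rightarrow> ('v \<Rightarrow> int) \<Rightarrow> (nat \<Rightarrow> 'v) \<Rightarrow> nat \<Rightarrow> bool" where
  "loop_guard scale val B d \<longleftrightarrow> (\<exists>\<alpha>. ext_pos val (comb scale B d \<alpha>))"

definition normalize ::
  "('a::field \<Rightarrow> 'v::ab_group_add \<Rightarrow> 'v) \<Rightarrow> ('v \<Rightarrow> int) \<Rightarrow> 'a \<Rightarrow> (nat \<Rightarrow> 'v) \<Rightarrow> nat \<Rightarrow> (nat \<Rightarrow> 'v)" where
  "normalize scale val x B d = B(d := scale (x powi (- val (B d))) (B d))"

definition init_state ::
  "('a::field \<Rightarrow> 'v::ab_group_add \<Rightarrow> 'v) \<Rightarrow> ('v \<Rightarrow> int) \<Rightarrow> 'a \<Rightarrow> (nat \<Rightarrow> 'v) \<Rightarrow> nat \<times> (nat \<Rightarrow> 'v)" where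
  "init_state scale val x B = (1, normalize scale val x B 1)"

definition proc_step ::
  "('a::field \<Rightarrow> 'v::ab_group_add \<Rightarrow> 'v) \<Rightarrow> ('v \<Rightarrow> int) \<Rightarrow> 'a \<Rightarrow> nat \<Rightarrow>
   nat \<times> (nat \<Rightarrow> 'v) \<Rightarrow> nat \<times> (nat \<Rightarrow> 'v) \<Rightarrow> bool" where
  "proc_step scale val x r s s' \<longleftrightarrow>
     (let (d, B) = s; (d', B') = s' in
       (1 \<le> d \<and> d \<le> r \<and> d' = d \<and>
          (\<exists>\<alpha>. ext_pos val (comb scale B d \<alpha>) \<and>
                B' = B(d := scale (inverse x) (comb scale B d \<alpha>)))) \<or>
       (1 \<le> d \<and> d < r \<and> \<not> loop_guard scale val B d \<and> d' = d + 1 \<and>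
          B' = normalize scale val x B (d + 1)))"

end

(* Once the procedure has moved past B_1, ..., B_{d-1}, these vectors no longer change and,
   since the loop guard failed at each of them, they form an orthonormal family:
   val (\<Sum> a_i B_i) \<le> min \<nu>(a_i).  The run also keeps B_1, ..., B_d triangular with respect
   to the initial basis, with a nonzero diagonal entry at d.  If the loop at some index D
   never stopped, then x^k B_D after k iterations would have value at least k, while it
   differs from the starting B_D by a sum of terms x^l \<Sum>_{i<D} \<alpha>_i B_i whose coefficients
   are integral by orthonormality; hence its coordinates in the initial basis form Cauchy
   sequences, and full dimension of the completion forces them to tend to 0.  But the D-th
   coordinate never changes and is nonzero. *)

theory Submission
  imports Defs
begin

definition ultrametric :: "('b::ab_group_add \<Rightarrow> int) \<Rightarrow> bool" where
  "ultrametric f \<longleftrightarrow> (\<forall>v. f (- v) = f v) \<and>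
     (\<forall>v w. v \<noteq> 0 \<longrightarrow> w \<noteq> 0 \<longrightarrow> v + w \<noteq> 0 \<longrightarrow> min (f v) (f w) \<le> f (v + w))"

lemma ext_ge_0 [simp]: "ext_ge f M 0"
  by (simp add: ext_ge_def)

lemma ext_ge_mono: "M' \<le> M \<Longrightarrow> ext_ge f M v \<Longrightarrow> ext_ge f M' v"
  by (auto simp: ext_ge_def)

lemma ext_pos_iff_ext_ge: "ext_pos f v \<longleftrightarrow> ext_ge f 1 v"
  by (auto simp: ext_pos_def ext_ge_def)

context
  fixes f :: "'b::ab_group_add \<Rightarrow> int"
  assumes ultra: "ultrametric f"
begin

lemma ext_ge_add:
  assumes "ext_ge f M v" "ext_ge f M w"
  shows "ext_ge f M (v + w)"
proof (cases "v = 0 \<or> w = 0 \<or> v + w = 0")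
  case False
  then have "min (f v) (f w) \<le> f (v + w)"
    using ultra by (simp add: ultrametric_def)
  with False assms show ?thesis
    by (simp add: ext_ge_def)
qed (use assms in \<open>auto simp: ext_ge_def\<close>)

lemma ext_ge_uminus: "ext_ge f M v \<Longrightarrow> ext_ge f M (- v)"
  using ultra by (simp add: ext_ge_def ultrametric_def)

lemma ext_ge_diff: "ext_ge f M v \<Longrightarrow> ext_ge f M w \<Longrightarrow> ext_ge f M (v - w)"
  using ext_ge_add[of M v "- w"] ext_ge_uminus[of M w] by simp

lemma ext_ge_sum: "(\<And>i. i \<in> S \<Longrightarrow> ext_ge f M (g i)) \<Longrightarrow> ext_ge f M (sum g S)"
  by (induction S rule: infinite_finite_induct) (simp_all add: ext_ge_add)

lemma cauchy_seq_of_increments: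
  assumes incr: "\<And>n. ext_ge f (int n + K) (c (Suc n) - c n)"
  shows "cauchy_seq f c"
proof -
  have tail: "ext_ge f (int n + K) (c m - c n)" if "n \<le> m" for n m
    using that
  proof (induction m rule: dec_induct)
    case (step m)
    have "ext_ge f (int n + K) (c (Suc m) - c m)"
      using ext_ge_mono[OF _ incr[of m]] step.hyps by simp
    then have "ext_ge f (int n + K) ((c (Suc m) - c m) + (c m - c n))"
      using step.IH by (rule ext_ge_add)
    then show ?case by simp
  qed simp
  have far_apart: "ext_ge f M (c m - c n)" if "nat (M - K) \<le> m" "nat (M - K) \<le> n" for M m n
  proof -
    have M: "M \<le> int m + K" "M \<le> int n + K"
      using that by linarith+
    show ?thesis
    proof (cases "n \<le> m")
      case True
      then show ?thesis using ext_ge_mono[OF M(2) tail] by simp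
    next
      case False
      then have "ext_ge f M (c n - c m)"
        using ext_ge_mono[OF M(1) tail[of m n]] by simp
      then have "ext_ge f M (- (c n - c m))"
        by (rule ext_ge_uminus)
      then show ?thesis by simp
    qed
  qed
  show ?thesis
    unfolding cauchy_seq_def by (intro allI exI[of _ "nat (_ - K)"] impI far_apart)
qed

end

lemma null_seq_of_ext_ge:
  assumes "\<And>k. ext_ge f (int k) (c k)"
  shows "null_seq f c"
proof -
  have "ext_ge f M (c k)" if "nat M \<le> k" for M k
    using that assms[of k] by (auto intro: ext_ge_mono[of M "int k"])
  then show ?thesis
    unfolding null_seq_def by blast
qed

lemma null_seq_const_eq_0:
  assumes "null_seq f (\<lambda>k. a)"
  shows "a = 0"
proof -
  from assms obtain N :: nat where "\<forall>n\<ge>N. ext_ge f (f a + 1) a"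
    unfolding null_seq_def by blast
  then show ?thesis
    by (auto simp: ext_ge_def)
qed

context
  fixes \<nu> :: "'a::field \<Rightarrow> int"
  assumes valuation: "is_valuation \<nu>"
begin

lemma valuation_mult: "a \<noteq> 0 \<Longrightarrow> b \<noteq> 0 \<Longrightarrow> \<nu> (a * b) = \<nu> a + \<nu> b"
  using valuation by (simp add: is_valuation_def)

lemma valuation_one: "\<nu> 1 = 0"
  using valuation_mult[of 1 1] by simp

lemma valuation_minus_one: "\<nu> (- 1) = 0"
  using valuation_mult[of "- 1" "- 1"] valuation_one by simp

lemma valuation_inverse: "a \<noteq> 0 \<Longrightarrow> \<nu> (inverse a) = - \<nu> a"
  using valuation_mult[of a "inverse a"] valuation_one by simp

lemma valuation_power: "a \<noteq> 0 \<Longrightarrow> \<nu> (a ^ n) = int n * \<nu> a"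
  by (induction n) (simp_all add: valuation_one valuation_mult algebra_simps)

lemma valuation_power_int: "a \<noteq> 0 \<Longrightarrow> \<nu> (a powi k) = k * \<nu> a"
  by (simp add: power_int_def valuation_power valuation_inverse)

lemma ultrametric_valuation: "ultrametric \<nu>"
proof -
  have "\<nu> (- a) = \<nu> a" for a
    using valuation_mult[of "- 1" a] valuation_minus_one by (cases "a = 0") simp_all
  then show ?thesis
    using valuation by (simp add: ultrametric_def is_valuation_def)
qed

lemma ext_ge_mult: "ext_ge \<nu> M a \<Longrightarrow> ext_ge \<nu> M' b \<Longrightarrow> ext_ge \<nu> (M + M') (a * b)"
  unfolding ext_ge_def by (cases "a = 0"; cases "b = 0") (auto simp: valuation_mult)

end

lemma finite_ex_last_argmin:
  fixes g :: "nat \<Rightarrow> 'b::linorder"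
  assumes "finite S" "S \<noteq> {}"
  obtains j where "j \<in> S" "\<And>i. i \<in> S \<Longrightarrow> g j \<le> g i" "\<And>i. i \<in> S \<Longrightarrow> j < i \<Longrightarrow> g j < g i"
proof -
  define T where "T = {i \<in> S. g i = Min (g ` S)}"
  have "Min (g ` S) \<in> g ` S"
    using assms by (intro Min_in) auto
  then obtain i where "i \<in> S" "g i = Min (g ` S)"
    by (metis imageE)
  then have T: "finite T" "T \<noteq> {}"
    using assms by (auto simp: T_def)
  have Max_T: "Max T \<in> S" "g (Max T) = Min (g ` S)"
    using Max_in[OF T] by (simp_all add: T_def)
  show thesis
  proof
    show "Max T \<in> S" "\<And>i. i \<in> S \<Longrightarrow> g (Max T) \<le> g i"
      using Max_T assms by simp_all
    show "g (Max T) < g i" if "i \<in> S" "Max T < i" for i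
    proof -
      have "i \<notin> T"
        using Max_ge[OF T(1), of i] that(2) by linarith
      then have "g i \<noteq> Min (g ` S)"
        using that(1) by (simp add: T_def)
      moreover have "Min (g ` S) \<le> g i"
        using that(1) assms(1) by simp
      ultimately show ?thesis
        using Max_T(2) by simp
    qed
  qed
qed

lemma mono_bounded_nat_eventually_const:
  fixes d :: "nat \<Rightarrow> nat"
  assumes "mono d" and "\<And>n. d n \<le> r"
  obtains N where "\<And>k. N \<le> k \<Longrightarrow> d k = d N"
proof -
  have fin: "finite (range d)"
    using assms(2) by (auto intro: finite_subset[of _ "{..r}"])
  then have "Max (range d) \<in> range d"
    by (intro Max_in) auto
  then obtain N where N: "d N = Max (range d)"
    by auto
  have "d k = d N" if "N \<le> k" for k
    using monoD[OF assms(1) that] Max_ge[OF fin, of "d k"] N by simp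
  then show thesis by (rule that)
qed

locale valued_space = vector_space +
  fixes \<nu> :: "'a \<Rightarrow> int" and val :: "'b \<Rightarrow> int"
  assumes valuation: "is_valuation \<nu>"
    and value_function: "is_value_function scale \<nu> val"
begin

lemma val_scale: "a \<noteq> 0 \<Longrightarrow> v \<noteq> 0 \<Longrightarrow> val (a *s v) = \<nu> a + val v"
  using value_function by (simp add: is_value_function_def)

lemma ultrametric_val: "ultrametric val"
proof -
  have "val (- v) = val v" for v
  proof (cases "v = 0")
    case False
    then have "val ((- 1) *s v) = \<nu> (- 1) + val v"
      by (intro val_scale) simp_all
    then show ?thesis
      using valuation_minus_one[OF valuation] by simp
  qed simp
  moreover have "\<forall>v w. v \<noteq> 0 \<longrightarrow> w \<noteq> 0 \<longrightarrow> v + w \<noteq> 0 \<longrightarrow> min (val v) (val w) \<le> val (v + w)"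
    using value_function by (simp add: is_value_function_def)
  ultimately show ?thesis
    by (simp add: ultrametric_def)
qed

lemma ext_ge_scale: "ext_ge \<nu> M a \<Longrightarrow> ext_ge val M' v \<Longrightarrow> ext_ge val (M + M') (a *s v)"
  unfolding ext_ge_def by (cases "a = 0"; cases "v = 0") (auto simp: val_scale)

lemma comb_cong: "(\<And>i. i \<le> j \<Longrightarrow> B' i = B i) \<Longrightarrow> comb scale B' j \<alpha> = comb scale B j \<alpha>"
  by (simp add: comb_def)

lemma loop_guard_cong:
  assumes "\<And>i. i \<le> j \<Longrightarrow> B' i = B i"
  shows "loop_guard scale val B' j = loop_guard scale val B j"
proof -
  have "comb scale B' j \<alpha> = comb scale B j \<alpha>" for \<alpha>
    using assms by (rule comb_cong)
  then show ?thesis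
    by (simp add: loop_guard_def)
qed

lemma sum_split_at_comb:
  assumes "j \<in> {1..<d}" "\<beta> j = 1"
  shows "(\<Sum>i\<in>{1..<d}. \<beta> i *s B i) = comb scale B j \<beta> + (\<Sum>i\<in>{j<..<d}. \<beta> i *s B i)"
proof -
  have "{1..<d} = {1..<j} \<union> insert j {j<..<d}" "{1..<j} \<inter> insert j {j<..<d} = {}"
    using assms(1) by auto
  then show ?thesis
    using assms(2) by (simp add: sum.union_disjoint comb_def algebra_simps)
qed

definition reduced_prefix :: "(nat \<Rightarrow> 'b) \<Rightarrow> nat \<Rightarrow> bool" where
  "reduced_prefix B d \<longleftrightarrow> (\<forall>j\<in>{1..<d}. ext_ge val 0 (B j) \<and> \<not> loop_guard scale val B j)"

text \<open>After dividing by the coefficient of minimal value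
  with the largest index j, the terms beyond j have positive value, so positivity of the whole
  sum would make the combination ending in B_j positive, which the failed guard at j excludes.\<close>

lemma reduced_prefix_coeff_ge:
  assumes red: "reduced_prefix B d"
    and sum_ge: "ext_ge val M (\<Sum>i\<in>{1..<d}. a i *s B i)"
    and i1: "i1 \<in> {1..<d}"
  shows "ext_ge \<nu> M (a i1)"
proof (rule ccontr)
  assume "\<not> ext_ge \<nu> M (a i1)"
  then have a_i1: "a i1 \<noteq> 0" "\<nu> (a i1) < M"
    by (auto simp: ext_ge_def)
  define S where "S = {i \<in> {1..<d}. a i \<noteq> 0}"
  have "finite S" "S \<noteq> {}"
    using i1 a_i1 by (auto simp: S_def)
  then obtain j where j: "j \<in> S" "\<And>i. i \<in> S \<Longrightarrow> \<nu> (a j) \<le> \<nu> (a i)"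
    and j_last: "\<And>i. i \<in> S \<Longrightarrow> j < i \<Longrightarrow> \<nu> (a j) < \<nu> (a i)"
    using finite_ex_last_argmin[of S "\<lambda>i. \<nu> (a i)"] by blast
  have aj: "a j \<noteq> 0" "j \<in> {1..<d}"
    using j(1) by (auto simp: S_def)
  define \<beta> where "\<beta> i = inverse (a j) * a i" for i
  define t where "t = (\<Sum>i\<in>{j<..<d}. \<beta> i *s B i)"
  have t_ge: "ext_ge val 1 t"
    unfolding t_def
  proof (rule ext_ge_sum[OF ultrametric_val])
    fix i assume i: "i \<in> {j<..<d}"
    show "ext_ge val 1 (\<beta> i *s B i)"
    proof (cases "a i = 0")
      case False
      with i aj have "\<nu> (a j) < \<nu> (a i)"
        using j_last by (simp add: S_def)
      with False aj have "ext_ge \<nu> 1 (\<beta> i)"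
        by (simp add: ext_ge_def \<beta>_def valuation_mult[OF valuation] valuation_inverse[OF valuation])
      moreover have "ext_ge val 0 (B i)"
        using red i aj by (simp add: reduced_prefix_def)
      ultimately show ?thesis
        using ext_ge_scale by fastforce
    qed (simp add: \<beta>_def)
  qed
  have "ext_ge \<nu> (- \<nu> (a j)) (inverse (a j))"
    using aj by (simp add: ext_ge_def valuation_inverse[OF valuation])
  from ext_ge_scale[OF this sum_ge]
  have "ext_ge val (M - \<nu> (a j)) (\<Sum>i\<in>{1..<d}. \<beta> i *s B i)"
    by (simp add: \<beta>_def scale_sum_right)
  moreover have "1 \<le> M - \<nu> (a j)"
    using j(2)[of i1] i1 a_i1 by (simp add: S_def)
  moreover have "(\<Sum>i\<in>{1..<d}. \<beta> i *s B i) = comb scale B j \<beta> + t"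
    using sum_split_at_comb[OF aj(2), of \<beta> B] aj(1) by (simp add: \<beta>_def t_def)
  ultimately have "ext_ge val 1 (comb scale B j \<beta> + t)"
    using ext_ge_mono by metis
  then have "ext_pos val (comb scale B j \<beta>)"
    using ext_ge_diff[OF ultrametric_val _ t_ge] by (fastforce simp: ext_pos_iff_ext_ge)
  then show False
    using red aj(2) by (auto simp: reduced_prefix_def loop_guard_def)
qed

end

locale basis_reduction = valued_space +
  fixes r :: nat and B0 :: "nat \<Rightarrow> 'b" and x :: 'a
  assumes inj_B0: "inj_on B0 {1..r}"
    and independent_B0: "independent (B0 ` {1..r})"
    and span_B0: "span (B0 ` {1..r}) = UNIV"
    and x_nonzero: "x \<noteq> 0" and valuation_x: "\<nu> x = 1"
    and full_dim: "completion_full_dim scale \<nu> val r B0"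
begin

definition coord :: "nat \<Rightarrow> 'b \<Rightarrow> 'a" where
  "coord j v = representation (B0 ` {1..r}) v (B0 j)"

lemma coord_add: "coord j (u + v) = coord j u + coord j v"
  using representation_add[OF independent_B0] span_B0 by (simp add: coord_def)

lemma coord_scale: "coord j (a *s v) = a * coord j v"
  using representation_scale[OF independent_B0] span_B0 by (simp add: coord_def)

lemma coord_diff: "coord j (u - v) = coord j u - coord j v"
  using representation_diff[OF independent_B0] span_B0 by (simp add: coord_def)

lemma coord_sum: "coord j (sum g S) = (\<Sum>i\<in>S. coord j (g i))"
  using representation_sum[OF independent_B0, of S g] span_B0 by (simp add: coord_def)

lemma coord_comb: "coord j (comb scale B d \<alpha>) = (\<Sum>i\<in>{1..<d}. \<alpha> i * coord j (B i)) + coord j (B d)"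
  by (simp add: comb_def coord_add coord_sum coord_scale)

lemma coord_B0: "i \<in> {1..r} \<Longrightarrow> j \<in> {1..r} \<Longrightarrow> coord j (B0 i) = (if j = i then 1 else 0)"
  using representation_basis[OF independent_B0, of "B0 i"] inj_B0
  by (auto simp: coord_def inj_on_eq_iff)

lemma sum_coord_scale_B0: "(\<Sum>j\<in>{1..r}. coord j v *s B0 j) = v"
proof -
  have "(\<Sum>b\<in>B0 ` {1..r}. representation (B0 ` {1..r}) v b *s b) = v"
    using independent_B0 span_B0 by (intro sum_representation_eq) auto
  then show ?thesis
    using sum.reindex[OF inj_B0, of "\<lambda>b. representation (B0 ` {1..r}) v b *s b"]
    by (simp add: coord_def)
qed

lemma ext_ge_normalize: "ext_ge val 0 (x powi (- val v) *s v)"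
  using val_scale[of "x powi (- val v)" v] x_nonzero
  by (cases "v = 0") (simp_all add: ext_ge_def valuation_power_int[OF valuation] valuation_x)

definition run_invariant :: "nat \<Rightarrow> (nat \<Rightarrow> 'b) \<Rightarrow> bool" where
  "run_invariant d B \<longleftrightarrow> 1 \<le> d \<and> d \<le> r \<and> reduced_prefix B d \<and> ext_ge val 0 (B d) \<and>
     (\<forall>i\<in>{1..d}. \<forall>j\<in>{i<..r}. coord j (B i) = 0) \<and> coord d (B d) \<noteq> 0 \<and>
     (\<forall>i\<in>{d<..r}. B i = B0 i)"

lemma run_invariant_init: "1 \<le> r \<Longrightarrow> run_invariant 1 (normalize scale val x B0 1)"
  using ext_ge_normalize[of "B0 1"] x_nonzero
  by (auto simp: run_invariant_def reduced_prefix_def normalize_def coord_scale coord_B0)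

lemma run_invariant_loop:
  assumes inv: "run_invariant d B" and pos: "ext_pos val (comb scale B d \<alpha>)"
  shows "run_invariant d (B(d := inverse x *s comb scale B d \<alpha>))" (is "run_invariant d ?B'")
proof -
  have "loop_guard scale val ?B' j = loop_guard scale val B j" if "j < d" for j
    using that by (intro loop_guard_cong) auto
  then have "reduced_prefix ?B' d"
    using inv by (simp add: run_invariant_def reduced_prefix_def)
  moreover have "ext_ge val 0 (?B' d)"
    using ext_ge_scale[of "- 1" "inverse x" 1] pos x_nonzero
    by (simp add: ext_ge_def ext_pos_iff_ext_ge valuation_inverse[OF valuation] valuation_x)
  moreover have coord_B'_d:
    "coord j (?B' d) = inverse x * ((\<Sum>i\<in>{1..<d}. \<alpha> i * coord j (B i)) + coord j (B d))" for j
    by (simp add: coord_scale coord_comb)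
  moreover have "coord j (?B' i) = 0" if i: "i \<in> {1..d}" and j: "j \<in> {i<..r}" for i j
  proof (cases "i = d")
    case True
    have "coord j (B l) = 0" if "l \<in> {1..d}" for l
      using inv that i j True by (simp add: run_invariant_def)
    then have "(\<Sum>l\<in>{1..<d}. \<alpha> l * coord j (B l)) = 0" "coord j (B d) = 0"
      using i True by (auto intro!: sum.neutral)
    with True show ?thesis
      by (simp only: coord_B'_d) simp
  qed (use inv i j in \<open>simp add: run_invariant_def\<close>)
  moreover have "coord d (?B' d) \<noteq> 0"
  proof -
    have "(\<Sum>l\<in>{1..<d}. \<alpha> l * coord d (B l)) = 0"
      using inv by (auto simp: run_invariant_def intro!: sum.neutral)
    then show ?thesis
      using inv x_nonzero by (simp only: coord_B'_d) (simp add: run_invariant_def)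
  qed
  ultimately show ?thesis
    using inv by (simp add: run_invariant_def)
qed

lemma run_invariant_next:
  assumes inv: "run_invariant d B" and "d < r" and guard: "\<not> loop_guard scale val B d"
  shows "run_invariant (d + 1) (normalize scale val x B (d + 1))" (is "run_invariant _ ?B'")
proof -
  have B'_def: "?B' = B(d + 1 := x powi (- val (B0 (d + 1))) *s B0 (d + 1))"
    using inv \<open>d < r\<close> by (simp add: run_invariant_def normalize_def)
  have "loop_guard scale val ?B' j = loop_guard scale val B j" if "j \<le> d" for j
    using that unfolding B'_def by (intro loop_guard_cong) auto
  then have "reduced_prefix ?B' (d + 1)"
    using inv guard unfolding B'_def
    by (auto simp: run_invariant_def reduced_prefix_def less_Suc_eq)
  moreover have "ext_ge val 0 (?B' (d + 1))"
    unfolding B'_def by (simp add: ext_ge_normalize)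
  ultimately show ?thesis
    using inv \<open>d < r\<close> x_nonzero unfolding B'_def
    by (auto simp: run_invariant_def coord_scale coord_B0)
qed

lemma run_invariant_step:
  "run_invariant d B \<Longrightarrow> proc_step scale val x r (d, B) (d', B') \<Longrightarrow> run_invariant d' B'"
  using run_invariant_loop[of d B] run_invariant_next[of d B] by (auto simp: proc_step_def)

lemma cauchy_coord_of_increments:
  assumes "finite I" and \<alpha>_ge: "\<And>k i. i \<in> I \<Longrightarrow> ext_ge \<nu> 0 (\<alpha> k i)"
    and incr: "\<And>k. w (Suc k) - w k = x ^ k *s (\<Sum>i\<in>I. \<alpha> k i *s P i)"
  shows "cauchy_seq \<nu> (\<lambda>k. coord j (w k))"
proof (rule cauchy_seq_of_increments[OF ultrametric_valuation[OF valuation]])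
  define K where "K = Min (insert 0 ((\<lambda>i. \<nu> (coord j (P i))) ` I))"
  have "ext_ge \<nu> K (coord j (P i))" if "i \<in> I" for i
    using that \<open>finite I\<close> by (simp add: ext_ge_def K_def)
  then have "ext_ge \<nu> (0 + K) (\<Sum>i\<in>I. \<alpha> k i * coord j (P i))" for k
    by (intro ext_ge_sum[OF ultrametric_valuation[OF valuation]] ext_ge_mult[OF valuation] \<alpha>_ge)
  moreover have "ext_ge \<nu> (int k) (x ^ k)" for k
    using x_nonzero by (simp add: ext_ge_def valuation_power[OF valuation] valuation_x)
  ultimately have "ext_ge \<nu> (int k + (0 + K)) (x ^ k * (\<Sum>i\<in>I. \<alpha> k i * coord j (P i)))" for k
    by (intro ext_ge_mult[OF valuation])
  then show "ext_ge \<nu> (int k + K) (coord j (w (Suc k)) - coord j (w k))" for k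
    by (simp add: coord_diff[symmetric] incr coord_scale coord_sum)
qed

lemma loop_coeff_integral:
  assumes inv: "run_invariant D B" and pos: "ext_pos val (comb scale B D \<alpha>)"
    and i: "i \<in> {1..<D}"
  shows "ext_ge \<nu> 0 (\<alpha> i)"
proof (rule reduced_prefix_coeff_ge[OF _ _ i])
  show "reduced_prefix B D"
    using inv by (simp add: run_invariant_def)
  have "ext_ge val 0 (comb scale B D \<alpha>)"
    using pos ext_ge_mono[of 0 1] by (simp add: ext_pos_iff_ext_ge)
  moreover have "ext_ge val 0 (B D)"
    using inv by (simp add: run_invariant_def)
  ultimately have "ext_ge val 0 (comb scale B D \<alpha> - B D)"
    by (rule ext_ge_diff[OF ultrametric_val])
  then show "ext_ge val 0 (\<Sum>i\<in>{1..<D}. \<alpha> i *s B i)"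
    by (simp add: comb_def)
qed

lemma no_infinite_loop:
  assumes inv: "\<And>k. run_invariant D (Bs k)"
    and loop: "\<And>k. \<exists>\<alpha>. ext_pos val (comb scale (Bs k) D \<alpha>) \<and>
                   Bs (Suc k) = (Bs k)(D := inverse x *s comb scale (Bs k) D \<alpha>)"
  shows False
proof -
  obtain \<alpha> where \<alpha>_pos: "\<And>k. ext_pos val (comb scale (Bs k) D (\<alpha> k))"
    and Bs_Suc: "\<And>k. Bs (Suc k) = (Bs k)(D := inverse x *s comb scale (Bs k) D (\<alpha> k))"
    using loop by metis
  define P where "P = Bs 0"
  have Bs_other: "Bs k i = P i" if "i \<noteq> D" for k i
    using that by (induction k) (simp_all add: P_def Bs_Suc)
  have D: "1 \<le> D" "D \<le> r"
    and P_tri: "\<And>i. i \<in> {1..<D} \<Longrightarrow> coord D (P i) = 0" and P_diag: "coord D (P D) \<noteq> 0"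
    using inv[of 0] by (auto simp: run_invariant_def P_def)
  define v where "v k = (\<Sum>i\<in>{1..<D}. \<alpha> k i *s P i)" for k
  define w where "w k = x ^ k *s Bs k D" for k
  have comb_eq: "comb scale (Bs k) D (\<alpha> k) = v k + Bs k D" for k
    unfolding comb_def v_def using Bs_other by (auto intro!: sum.cong)
  have w_incr: "w (Suc k) - w k = x ^ k *s v k" for k
    using x_nonzero
    by (simp add: w_def Bs_Suc comb_eq scale_right_distrib mult.assoc[symmetric] mult.commute)
  have "cauchy_seq \<nu> (\<lambda>k. coord j (w k))" for j
    using loop_coeff_integral[OF inv \<alpha>_pos] w_incr
    by (intro cauchy_coord_of_increments[where I = "{1..<D}" and \<alpha> = \<alpha> and P = P])
      (simp_all add: v_def)
  moreover have "null_seq val (\<lambda>k. \<Sum>j\<in>{1..r}. coord j (w k) *s B0 j)"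
    unfolding sum_coord_scale_B0
  proof (rule null_seq_of_ext_ge)
    have "ext_ge \<nu> (int k) (x ^ k)" for k
      using x_nonzero by (simp add: ext_ge_def valuation_power[OF valuation] valuation_x)
    moreover have "ext_ge val 0 (Bs k D)" for k
      using inv[of k] by (simp add: run_invariant_def)
    ultimately show "ext_ge val (int k) (w k)" for k
      unfolding w_def using ext_ge_scale by fastforce
  qed
  ultimately have "null_seq \<nu> (\<lambda>k. coord D (w k))"
    using full_dim[unfolded completion_full_dim_def, rule_format, of "\<lambda>j k. coord j (w k)"] D
    by simp
  moreover have "coord D (w k) = coord D (P D)" for k
  proof (induction k)
    case (Suc k)
    have "(\<Sum>i\<in>{1..<D}. \<alpha> k i * coord D (P i)) = 0"
      using P_tri by (intro sum.neutral) simp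
    then have "coord D (w (Suc k) - w k) = 0"
      by (simp add: w_incr v_def coord_scale coord_sum)
    with Suc show ?case
      by (simp add: coord_diff)
  qed (simp add: w_def P_def)
  ultimately have "null_seq \<nu> (\<lambda>k. coord D (P D))"
    by simp
  with P_diag show False
    by (auto dest: null_seq_const_eq_0)
qed

lemma no_infinite_run:
  assumes f0: "f 0 = init_state scale val x B0"
    and steps: "\<And>n. proc_step scale val x r (f n) (f (Suc n))"
  shows False
proof -
  have "1 \<le> r"
    using steps[of 0] f0 by (cases "f 1") (auto simp: init_state_def proc_step_def)
  have inv: "run_invariant (fst (f n)) (snd (f n))" for n
  proof (induction n)
    case 0
    show ?case using f0 run_invariant_init[OF \<open>1 \<le> r\<close>] by (simp add: init_state_def)
  next
    case (Suc n)
    then show ?case using run_invariant_step steps[of n] by (metis prod.collapse)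
  qed
  have d_step: "fst (f (Suc n)) \<in> {fst (f n), fst (f n) + 1}" for n
    using steps[of n] by (cases "f n"; cases "f (Suc n)") (auto simp: proc_step_def)
  have "fst (f n) \<le> fst (f (Suc n))" for n
    using d_step[of n] by auto
  then have "mono (\<lambda>n. fst (f n))"
    by (simp add: mono_iff_le_Suc)
  moreover have "fst (f n) \<le> r" for n
    using inv[of n] by (simp add: run_invariant_def)
  ultimately obtain N where N: "\<And>k. N \<le> k \<Longrightarrow> fst (f k) = fst (f N)"
    using mono_bounded_nat_eventually_const by blast
  show False
  proof (rule no_infinite_loop[of "fst (f N)" "\<lambda>k. snd (f (N + k))"])
    show "run_invariant (fst (f N)) (snd (f (N + k)))" for k
      using inv[of "N + k"] N[of "N + k"] by simp
    show "\<exists>\<alpha>. ext_pos val (comb scale (snd (f (N + k))) (fst (f N)) \<alpha>) \<and>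
            snd (f (N + Suc k)) = (snd (f (N + k)))(fst (f N) :=
              inverse x *s comb scale (snd (f (N + k))) (fst (f N)) \<alpha>)" for k
      using steps[of "N + k"] N[of "N + k"] N[of "N + Suc k"]
      by (cases "f (N + k)"; cases "f (N + Suc k)") (auto simp: proc_step_def)
  qed
qed

end

theorem mainTheorem3:
  fixes scale :: "'a::field_char_0 \<Rightarrow> 'v::ab_group_add \<Rightarrow> 'v"
    and \<nu> :: "'a \<Rightarrow> int" and val :: "'v \<Rightarrow> int"
    and r :: nat and B :: "nat \<Rightarrow> 'v" and x :: 'a
  assumes "vector_space scale"
    and "is_valuation \<nu>"
    and "is_value_function scale \<nu> val"
    and "vector_space.dim scale UNIV = r"
    and "inj_on B {1..r}"
    and "\<not> module.dependent scale (B ` {1..r})"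
    and "module.span scale (B ` {1..r}) = UNIV"
    and "x \<noteq> 0" and "\<nu> x = 1"
    and "completion_full_dim scale \<nu> val r B"
  shows "\<not> (\<exists>f :: nat \<Rightarrow> nat \<times> (nat \<Rightarrow> 'v).
             f 0 = init_state scale val x B \<and> (\<forall>n. proc_step scale val x r (f n) (f (Suc n))))"
proof
  interpret basis_reduction scale \<nu> val r B x
    by (intro basis_reduction.intro valued_space.intro basis_reduction_axioms.intro
        valued_space_axioms.intro assms)
  assume "\<exists>f :: nat \<Rightarrow> nat \<times> (nat \<Rightarrow> 'v).
            f 0 = init_state scale val x B \<and> (\<forall>n. proc_step scale val x r (f n) (f (Suc n)))"
  then obtain f :: "nat \<Rightarrow> nat \<times> (nat \<Rightarrow> 'v)"
    where f0: "f 0 = init_state scale val x B"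
      and steps: "\<And>n. proc_step scale val x r (f n) (f (Suc n))"
    by blast
  show False
    by (rule no_infinite_run[of f, OF f0 steps])
qed

end
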